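(* For every $\delta>0$ and $p\in(0,1)$ there exists a constant $C=C(\delta,p)<\infty$ such that for all $n\ge1$ and $v\in[0,n]^2\cap\mathbb{Z}^2$, \[ \sum_{i\in\mathbb{N}}I_{v,i}(T_n)^2\le C\,\mathbb{P}(v\in\pi_n)^{2-\delta}. \]
   Context: $\mathbb{N}=\{0,1,2,\dots\}$. Let $(X_{u,j})_{u\in\mathbb{Z}^2,j\in\mathbb{N}}$ be i.i.d. Bernoulli($p$) and $\omega_u=\min\{j\ge0:X_{u,j}=1\}$ (i.i.d. geometric weights). $T_n$ is the maximum of $\sum_{x\in\gamma}\omega_x$ over up-right nearest-neighbour paths $\gamma$ from $(0,0)$ to $(n,n)$, viewed as a function of the bits $(X_{u,j})$; geodesics are maximizing paths and $\pi_n$ is the set of vertices lying on at least one geodesic. The influence of bit $(v,i)$ is $I_{v,i}(T_n)=\mathbb{E}\big[\big|\mathbb{E}[T_n\mid (X_{u,j})_{(u,j)\ne(v,i)}]-T_n\big|\big]$. *)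

theory Defs
  imports "HOL-Probability.Probability"
begin

type_synonym site = "int \<times> int"
type_synonym bits = "site \<times> nat \<Rightarrow> bool"

definition up_right_path :: "nat \<Rightarrow> site list \<Rightarrow> bool" where
  "up_right_path n \<gamma> \<longleftrightarrow>
     length \<gamma> = 2 * n + 1 \<and> hd \<gamma> = (0, 0) \<and> last \<gamma> = (int n, int n) \<and>
     (\<forall>k < 2 * n. \<gamma> ! Suc k = \<gamma> ! k + (1, 0) \<or> \<gamma> ! Suc k = \<gamma> ! k + (0, 1))"

definition weight :: "bits \<Rightarrow> site \<Rightarrow> nat" where
  "weight X u = (LEAST j. X (u, j))"

definition path_weight :: "bits \<Rightarrow> site list \<Rightarrow> real" where
  "path_weight X \<gamma> = (\<Sum>x\<leftarrow>\<gamma>. real (weight X x))"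

definition passage_time :: "nat \<Rightarrow> bits \<Rightarrow> real" where
  "passage_time n X = Max (path_weight X ` {\<gamma>. up_right_path n \<gamma>})"

definition geodesic :: "nat \<Rightarrow> bits \<Rightarrow> site list \<Rightarrow> bool" where
  "geodesic n X \<gamma> \<longleftrightarrow> up_right_path n \<gamma> \<and> path_weight X \<gamma> = passage_time n X"

definition geodesic_vertices :: "nat \<Rightarrow> bits \<Rightarrow> site set" where
  "geodesic_vertices n X = {x. \<exists>\<gamma>. geodesic n X \<gamma> \<and> x \<in> set \<gamma>}"

definition bits_space :: "real \<Rightarrow> bits measure" where
  "bits_space p = PiM UNIV (\<lambda>_. measure_pmf (bernoulli_pmf p))"

definition others_algebra :: "real \<Rightarrow> site \<times> nat \<Rightarrow> bits measure" where
  "others_algebra p k =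
     vimage_algebra (space (bits_space p)) (\<lambda>X. restrict X (UNIV - {k}))
       (PiM (UNIV - {k}) (\<lambda>_. measure_pmf (bernoulli_pmf p)))"

definition influence :: "real \<Rightarrow> nat \<Rightarrow> site \<Rightarrow> nat \<Rightarrow> real" where
  "influence p n v i =
     (\<integral>X. \<bar>real_cond_exp (bits_space p) (others_algebra p (v, i)) (passage_time n) X
            - passage_time n X\<bar> \<partial>bits_space p)"

end

theory Submission
  imports Defs
begin

(*
  Setting the bit (v, i) to 1 gives a function of the remaining bits, so it may replace the
  conditional expectation at the cost of a factor 2: the influence is at most
  2 E |T_n - T_n'|, where T_n' is the passage time after the change. The change lowers
  omega_v to min omega_v i and leaves every other weight alone, hence
  0 <= T_n - T_n' <= (omega_v - i)^+ 1{v in pi_n}. Writing (omega_v - i)^+ as the number of j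
  with omega_v > i + j, each event {omega_v > i + j, v in pi_n} has probability at most
  min ((1 - p)^(i+j+1)) P(v in pi_n) <= r^(i+j+1) P(v in pi_n)^(1 - theta), with
  r = (1 - p)^theta. So the influences decay geometrically in i with prefactor
  P(v in pi_n)^(1 - theta), and the sum of their squares is O(P(v in pi_n)^(2 - 2 theta));
  take theta = min delta 1 / 2.
*)

lemma up_right_path_nth:
  assumes "up_right_path n \<gamma>" "k \<le> 2 * n"
  shows "fst (\<gamma> ! k) + snd (\<gamma> ! k) = int k \<and> fst (\<gamma> ! k) \<ge> 0 \<and> snd (\<gamma> ! k) \<ge> 0"
  using assms(2)
proof (induction k)
  case 0
  have "\<gamma> \<noteq> []" using assms(1) unfolding up_right_path_def by auto
  then have "\<gamma> ! 0 = (0, 0)" using assms(1) unfolding up_right_path_def by (simp add: hd_conv_nth)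
  then show ?case by simp
next
  case (Suc k)
  then have "\<gamma> ! Suc k = \<gamma> ! k + (1, 0) \<or> \<gamma> ! Suc k = \<gamma> ! k + (0, 1)"
    using assms(1) unfolding up_right_path_def by simp
  then show ?case using Suc by auto
qed

lemma up_right_path_distinct:
  assumes "up_right_path n \<gamma>"
  shows "distinct \<gamma>"
proof (rule distinct_conv_nth[THEN iffD2], intro allI impI)
  have len: "length \<gamma> = 2 * n + 1" using assms unfolding up_right_path_def by simp
  fix i j assume "i < length \<gamma>" "j < length \<gamma>" "i \<noteq> j"
  then have "fst (\<gamma> ! i) + snd (\<gamma> ! i) \<noteq> fst (\<gamma> ! j) + snd (\<gamma> ! j)"
    using up_right_path_nth[OF assms, of i] up_right_path_nth[OF assms, of j] len by auto
  then show "\<gamma> ! i \<noteq> \<gamma> ! j" by metis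
qed

lemma finite_up_right_paths: "finite {\<gamma>. up_right_path n \<gamma>}"
proof (rule finite_subset)
  let ?B = "{0..int (2 * n)} \<times> {0..int (2 * n)}"
  show "finite {xs. set xs \<subseteq> ?B \<and> length xs = 2 * n + 1}"
    by (rule finite_lists_length_eq) simp
  show "{\<gamma>. up_right_path n \<gamma>} \<subseteq> {xs. set xs \<subseteq> ?B \<and> length xs = 2 * n + 1}"
  proof
    fix \<gamma> assume "\<gamma> \<in> {\<gamma>. up_right_path n \<gamma>}"
    then have u: "up_right_path n \<gamma>" by simp
    have "set \<gamma> \<subseteq> ?B"
    proof
      fix x assume "x \<in> set \<gamma>"
      then obtain k where "k < 2 * n + 1" "\<gamma> ! k = x"
        using u unfolding up_right_path_def by (auto simp: in_set_conv_nth)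
      then show "x \<in> ?B" using up_right_path_nth[OF u, of k] by (cases x) auto
    qed
    then show "\<gamma> \<in> {xs. set xs \<subseteq> ?B \<and> length xs = 2 * n + 1}"
      using u by (simp add: up_right_path_def)
  qed
qed

definition staircase_path :: "nat \<Rightarrow> site list" where
  "staircase_path n = map (\<lambda>k. (int (min k n), int (k - n))) [0..<2 * n + 1]"

lemma up_right_path_staircase: "up_right_path n (staircase_path n)"
proof -
  have nth: "staircase_path n ! k = (int (min k n), int (k - n))" if "k < 2 * n + 1" for k
    using that unfolding staircase_path_def by (simp del: upt_Suc)
  have ne: "staircase_path n \<noteq> []" unfolding staircase_path_def by simp
  show ?thesis
    unfolding up_right_path_def
  proof (intro conjI allI impI)
    show "length (staircase_path n) = 2 * n + 1" unfolding staircase_path_def by simp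
    show "hd (staircase_path n) = (0, 0)" using nth[of 0] ne by (simp add: hd_conv_nth)
    show "last (staircase_path n) = (int n, int n)" using nth[of "2 * n"] ne
      by (simp add: last_conv_nth staircase_path_def del: upt_Suc)
    fix k assume "k < 2 * n"
    then show "staircase_path n ! Suc k = staircase_path n ! k + (1, 0) \<or>
               staircase_path n ! Suc k = staircase_path n ! k + (0, 1)"
      using nth[of k] nth[of "Suc k"] by (cases "k < n") auto
  qed
qed

lemma path_weight_nonneg: "path_weight X \<gamma> \<ge> 0"
  unfolding path_weight_def by (induction \<gamma>) auto

lemma path_weight_eq_sum_set:
  "distinct \<gamma> \<Longrightarrow> path_weight X \<gamma> = (\<Sum>x\<in>set \<gamma>. real (weight X x))"
  unfolding path_weight_def by (simp add: sum_list_distinct_conv_sum_set)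

lemma path_weight_mono: "(\<And>x. weight Y x \<le> weight X x) \<Longrightarrow> path_weight Y \<gamma> \<le> path_weight X \<gamma>"
  unfolding path_weight_def by (induction \<gamma>) (auto intro: add_mono)

lemma path_weight_le_passage_time: "up_right_path n \<gamma> \<Longrightarrow> path_weight X \<gamma> \<le> passage_time n X"
  unfolding passage_time_def by (rule Max_ge) (use finite_up_right_paths in auto)

lemma geodesic_exists: "\<exists>\<gamma>. geodesic n X \<gamma>"
proof -
  have "passage_time n X \<in> path_weight X ` {\<gamma>. up_right_path n \<gamma>}"
    unfolding passage_time_def
    by (rule Max_in) (use finite_up_right_paths up_right_path_staircase in auto)
  then show ?thesis unfolding geodesic_def by auto
qed

lemma passage_time_nonneg: "passage_time n X \<ge> 0"
  using path_weight_le_passage_time[OF up_right_path_staircase] path_weight_nonneg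
  by (rule order_trans[rotated])

lemma passage_time_le_sum_path_weight:
  "passage_time n X \<le> (\<Sum>\<gamma>\<in>{\<gamma>. up_right_path n \<gamma>}. path_weight X \<gamma>)"
proof -
  obtain \<gamma> where "up_right_path n \<gamma>" "passage_time n X = path_weight X \<gamma>"
    using geodesic_exists unfolding geodesic_def by metis
  then show ?thesis
    using member_le_sum[of \<gamma> "{\<gamma>. up_right_path n \<gamma>}" "path_weight X"]
      finite_up_right_paths path_weight_nonneg by auto
qed

lemma passage_time_mono: "(\<And>x. weight Y x \<le> weight X x) \<Longrightarrow> passage_time n Y \<le> passage_time n X"
  using geodesic_exists[of n Y] path_weight_mono path_weight_le_passage_time
  unfolding geodesic_def by (metis order_trans)

lemma passage_time_diff_le:
  assumes le: "\<And>x. weight Y x \<le> weight X x" and eq: "\<And>x. x \<noteq> v \<Longrightarrow> weight Y x = weight X x"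
  shows "passage_time n X - passage_time n Y
           \<le> real (weight X v - weight Y v) * indicator {X. v \<in> geodesic_vertices n X} X"
proof -
  obtain \<gamma> where g: "geodesic n X \<gamma>" using geodesic_exists by blast
  then have u: "up_right_path n \<gamma>" and TX: "passage_time n X = path_weight X \<gamma>"
    unfolding geodesic_def by auto
  have "path_weight X \<gamma> - path_weight Y \<gamma> = (\<Sum>x\<in>set \<gamma>. real (weight X x) - real (weight Y x))"
    using up_right_path_distinct[OF u] by (simp add: path_weight_eq_sum_set sum_subtractf)
  also have "\<dots> = (\<Sum>x\<in>set \<gamma>. if x = v then real (weight X v - weight Y v) else 0)"
    by (rule sum.cong) (auto simp: eq le of_nat_diff)
  also have "\<dots> = (if v \<in> set \<gamma> then real (weight X v - weight Y v) else 0)"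
    by (simp add: sum.delta)
  also have "\<dots> \<le> real (weight X v - weight Y v) * indicator {X. v \<in> geodesic_vertices n X} X"
    using g unfolding geodesic_vertices_def by (auto simp: indicator_def)
  finally show ?thesis
    using TX path_weight_le_passage_time[OF u, of Y] by linarith
qed

lemma weight_fun_upd_other: "u \<noteq> v \<Longrightarrow> weight (X((v, i) := b)) u = weight X u"
  unfolding weight_def by simp

lemma weight_fun_upd_True:
  assumes "\<exists>l. X (v, l)"
  shows "weight (X((v, i) := True)) v = min (weight X v) i"
proof -
  have success: "X (v, weight X v)" unfolding weight_def using assms by (rule LeastI_ex)
  have failures: "\<not> X (v, j)" if "j < weight X v" for j
    using that unfolding weight_def by (rule not_less_Least)
  show ?thesis
    unfolding weight_def[of "X(_ := _)"]
    by (rule Least_equality) (use success failures in \<open>auto simp: min_def intro: leI\<close>)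
qed

lemma passage_time_set_bit:
  assumes "\<exists>l. X (v, l)"
  shows passage_time_set_bit_le: "passage_time n (X((v, i) := True)) \<le> passage_time n X"
    and passage_time_set_bit_diff_le: "passage_time n X - passage_time n (X((v, i) := True))
          \<le> real (weight X v - i) * indicator {X. v \<in> geodesic_vertices n X} X"
proof -
  let ?Y = "X((v, i) := True)"
  have le: "weight ?Y x \<le> weight X x" for x
    by (cases "x = v") (auto simp: weight_fun_upd_True[OF assms] weight_fun_upd_other)
  have eq: "x \<noteq> v \<Longrightarrow> weight ?Y x = weight X x" for x by (rule weight_fun_upd_other)
  have "weight X v - weight ?Y v = weight X v - i"
    by (simp add: weight_fun_upd_True[OF assms] min_def)
  then show "passage_time n X - passage_time n ?Y
               \<le> real (weight X v - i) * indicator {X. v \<in> geodesic_vertices n X} X"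
    using passage_time_diff_le[of ?Y X v n, OF le eq] by simp
  show "passage_time n ?Y \<le> passage_time n X" by (rule passage_time_mono[OF le])
qed

lemma measurable_weight:
  assumes [measurable]: "\<And>k. (\<lambda>x. F x k) \<in> N \<rightarrow>\<^sub>M count_space UNIV"
  shows "(\<lambda>x. weight (F x) u) \<in> N \<rightarrow>\<^sub>M count_space UNIV"
  unfolding weight_def by measurable

lemma measurable_path_weight:
  assumes "\<And>k. (\<lambda>x. F x k) \<in> N \<rightarrow>\<^sub>M count_space UNIV"
  shows "(\<lambda>x. path_weight (F x) \<gamma>) \<in> borel_measurable N"
proof (induction \<gamma>)
  case Nil
  then show ?case by (simp add: path_weight_def)
next
  case (Cons a \<gamma>)
  have [measurable]: "(\<lambda>x. weight (F x) a) \<in> N \<rightarrow>\<^sub>M count_space UNIV"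
    using assms by (rule measurable_weight)
  have "(\<lambda>x. path_weight (F x) (a # \<gamma>)) = (\<lambda>x. real (weight (F x) a) + path_weight (F x) \<gamma>)"
    by (simp add: path_weight_def)
  then show ?case using Cons by simp
qed

lemma measurable_passage_time:
  assumes "\<And>k. (\<lambda>x. F x k) \<in> N \<rightarrow>\<^sub>M count_space UNIV"
  shows "(\<lambda>x. passage_time n (F x)) \<in> borel_measurable N"
  unfolding passage_time_def
  by (rule borel_measurable_Max[OF finite_up_right_paths]) (rule measurable_path_weight[OF assms])

lemma space_bits_space [simp]: "space (bits_space p) = UNIV"
  by (auto simp: bits_space_def space_PiM PiE_def extensional_def)

lemma measurable_bit [measurable]: "(\<lambda>X. X k) \<in> bits_space p \<rightarrow>\<^sub>M count_space UNIV"
  unfolding bits_space_def by measurable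

lemma measurable_weight_bits [measurable]: "(\<lambda>X. weight X u) \<in> bits_space p \<rightarrow>\<^sub>M count_space UNIV"
  by (rule measurable_weight) simp

lemma measurable_path_weight_bits [measurable]:
  "(\<lambda>X. path_weight X \<gamma>) \<in> borel_measurable (bits_space p)"
  by (rule measurable_path_weight) simp

lemma measurable_passage_time_bits [measurable]: "passage_time n \<in> borel_measurable (bits_space p)"
  using measurable_passage_time[of "\<lambda>X. X" "bits_space p" n] by simp

lemma sets_geodesic_vertex_event [measurable]:
  "{X \<in> space (bits_space p). v \<in> geodesic_vertices n X} \<in> sets (bits_space p)"
proof -
  have "{X \<in> space (bits_space p). v \<in> geodesic_vertices n X} =
     (\<Union>\<gamma>\<in>{\<gamma>. up_right_path n \<gamma> \<and> v \<in> set \<gamma>}.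
        {X \<in> space (bits_space p). path_weight X \<gamma> = passage_time n X})"
    unfolding geodesic_vertices_def geodesic_def by auto
  also have "\<dots> \<in> sets (bits_space p)"
  proof (rule sets.finite_UN)
    show "finite {\<gamma>. up_right_path n \<gamma> \<and> v \<in> set \<gamma>}"
      by (rule finite_subset[OF _ finite_up_right_paths]) auto
  qed measurable
  finally show ?thesis .
qed

lemma prob_space_bits_space: "prob_space (bits_space p)"
proof -
  interpret product_prob_space "\<lambda>_. measure_pmf (bernoulli_pmf p)" UNIV
    by unfold_locales
  show ?thesis unfolding bits_space_def by (rule prob_space_axioms)
qed

lemma subalgebra_others_algebra: "subalgebra (bits_space p) (others_algebra p k)"
  unfolding subalgebra_def others_algebra_def
proof
  show "sets (vimage_algebra (space (bits_space p)) (\<lambda>X. restrict X (UNIV - {k}))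
          (Pi\<^sub>M (UNIV - {k}) (\<lambda>_. measure_pmf (bernoulli_pmf p)))) \<subseteq> sets (bits_space p)"
    by (rule sets_image_in_sets[OF refl])
       (unfold bits_space_def, rule measurable_restrict_subset, simp)
qed simp

lemma measurable_passage_time_set_bit:
  "(\<lambda>X. passage_time n (X(k := True))) \<in> borel_measurable (others_algebra p k)"
proof -
  let ?N = "Pi\<^sub>M (UNIV - {k}) (\<lambda>_. measure_pmf (bernoulli_pmf p))"
  have "(\<lambda>Y. if j = k then True else Y j) \<in> ?N \<rightarrow>\<^sub>M count_space UNIV" for j
  proof (cases "j = k")
    case False
    then show ?thesis
      using measurable_component_singleton[of j "UNIV - {k}" "\<lambda>_. measure_pmf (bernoulli_pmf p)"]
      by (simp add: measurable_cong_sets[OF refl sets_measure_pmf_count_space])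
  qed simp
  then have "(\<lambda>Y. passage_time n (\<lambda>j. if j = k then True else Y j)) \<in> borel_measurable ?N"
    by (rule measurable_passage_time)
  moreover have "(\<lambda>X. restrict X (UNIV - {k})) \<in> others_algebra p k \<rightarrow>\<^sub>M ?N"
    unfolding others_algebra_def by (rule measurable_vimage_algebra1) (auto simp: space_PiM)
  ultimately have "(\<lambda>X. passage_time n (\<lambda>j. if j = k then True else restrict X (UNIV - {k}) j))
                     \<in> borel_measurable (others_algebra p k)"
    by (rule measurable_compose[rotated])
  moreover have "(\<lambda>j. if j = k then True else restrict X (UNIV - {k}) j) = X(k := True)" for X :: bits
    by (auto simp: restrict_def)
  ultimately show ?thesis by simp
qed

lemma sets_initial_failures [measurable]: "{X. \<forall>l\<le>t. \<not> X (u, l)} \<in> sets (bits_space p)"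
proof -
  have "{X \<in> space (bits_space p). \<forall>l\<in>{..t}. \<not> X (u, l)} \<in> sets (bits_space p)"
    by measurable
  moreover have "{X \<in> space (bits_space p). \<forall>l\<in>{..t}. \<not> X (u, l)} = {X. \<forall>l\<le>t. \<not> X (u, l)}"
    by auto
  ultimately show ?thesis by simp
qed

lemma excess_weight_le_suminf_failures:
  "ennreal (real (weight X u - m) * indicator A X)
     \<le> (\<Sum>j. indicator ({X. \<forall>l\<le>m + j. \<not> X (u, l)} \<inter> A) X)"
proof (cases "X \<in> A")
  case True
  let ?N = "weight X u - m"
  have "ennreal (real ?N * indicator A X) = (\<Sum>j<?N. 1)"
    using True by (simp add: ennreal_of_nat_eq_real_of_nat)
  also have "\<dots> = (\<Sum>j<?N. indicator ({X. \<forall>l\<le>m + j. \<not> X (u, l)} \<inter> A) X)"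
  proof (rule sum.cong)
    fix j assume "j \<in> {..<?N}"
    then have "m + j < weight X u" by simp
    then have "\<forall>l\<le>m + j. \<not> X (u, l)"
      unfolding weight_def using not_less_Least[where P = "\<lambda>l. X (u, l)"] by (meson le_less_trans)
    then show "1 = indicator ({X. \<forall>l\<le>m + j. \<not> X (u, l)} \<inter> A) X" using True by simp
  qed simp
  also have "\<dots> \<le> (\<Sum>j. indicator ({X. \<forall>l\<le>m + j. \<not> X (u, l)} \<inter> A) X)"
    by (rule sum_le_suminf) auto
  finally show ?thesis .
qed simp

lemma min_le_powr_mult_powr:
  fixes x y \<theta> :: real
  assumes "0 \<le> x" "0 \<le> y" "0 < \<theta>" "\<theta> < 1"
  shows "min x y \<le> x powr \<theta> * y powr (1 - \<theta>)"
proof (cases "x = 0 \<or> y = 0")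
  case True
  then show ?thesis using assms by auto
next
  case False
  then have "x > 0" "y > 0" using assms by auto
  then have "min x y = min x y powr \<theta> * min x y powr (1 - \<theta>)"
    by (simp add: powr_add[symmetric])
  also have "\<dots> \<le> x powr \<theta> * y powr (1 - \<theta>)"
    using \<open>x > 0\<close> \<open>y > 0\<close> assms by (intro mult_mono powr_mono2) auto
  finally show ?thesis .
qed

lemma (in sigma_finite_subalgebra) integral_abs_real_cond_exp_le:
  fixes g :: "'a \<Rightarrow> real"
  assumes gi: "integrable M g"
  shows "(\<integral>x. \<bar>real_cond_exp M F g x\<bar> \<partial>M) \<le> (\<integral>x. \<bar>g x\<bar> \<partial>M)"
proof -
  define s where "s x = sgn (real_cond_exp M F g x)" for x
  have sF [measurable]: "s \<in> borel_measurable F" unfolding s_def by measurable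
  have [measurable]: "s \<in> borel_measurable M" "g \<in> borel_measurable M"
    using measurable_from_subalg[OF subalg sF] gi by auto
  have sgi: "integrable M (\<lambda>x. s x * g x)"
    by (rule Bochner_Integration.integrable_bound[OF gi]) (auto simp: s_def abs_mult sgn_real_def)
  \<comment> \<open>The sign of the conditional expectation is F-measurable, so it can be moved inside.\<close>
  have "(\<integral>x. \<bar>real_cond_exp M F g x\<bar> \<partial>M) = (\<integral>x. s x * real_cond_exp M F g x \<partial>M)"
    by (rule Bochner_Integration.integral_cong[OF refl]) (auto simp: s_def sgn_real_def)
  also have "\<dots> = (\<integral>x. s x * g x \<partial>M)"
    by (rule real_cond_exp_intg(2)) (use sgi in auto)
  also have "\<dots> \<le> (\<integral>x. \<bar>g x\<bar> \<partial>M)"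
    by (rule Bochner_Integration.integral_mono) (use sgi gi in \<open>auto simp: s_def sgn_real_def\<close>)
  finally show ?thesis .
qed

lemma cond_exp_deviation_le:
  fixes f h :: "'a \<Rightarrow> real"
  assumes "sigma_finite_subalgebra M F" and fi: "integrable M f" and hi: "integrable M h"
    and hF: "h \<in> borel_measurable F"
  shows "(\<integral>x. \<bar>real_cond_exp M F f x - f x\<bar> \<partial>M) \<le> 2 * (\<integral>x. \<bar>f x - h x\<bar> \<partial>M)"
proof -
  interpret sigma_finite_subalgebra M F by fact
  define g where "g x = f x - h x" for x
  have gi: "integrable M g" unfolding g_def using fi hi by auto
  have cgi: "integrable M (real_cond_exp M F g)" using gi by (rule real_cond_exp_int(1))
  have cfi: "integrable M (real_cond_exp M F f)" using fi by (rule real_cond_exp_int(1))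
  have "AE x in M. real_cond_exp M F g x = real_cond_exp M F f x - real_cond_exp M F h x"
    unfolding g_def using fi hi by (rule real_cond_exp_diff)
  moreover have "AE x in M. real_cond_exp M F h x = h x" using hi hF by (rule real_cond_exp_F_meas)
  ultimately have "AE x in M. \<bar>real_cond_exp M F f x - f x\<bar> \<le> \<bar>real_cond_exp M F g x\<bar> + \<bar>g x\<bar>"
    by eventually_elim (auto simp: g_def)
  then have "(\<integral>x. \<bar>real_cond_exp M F f x - f x\<bar> \<partial>M)
               \<le> (\<integral>x. \<bar>real_cond_exp M F g x\<bar> + \<bar>g x\<bar> \<partial>M)"
    by (rule integral_mono_AE[rotated 2]) (use cfi fi cgi gi in auto)
  also have "\<dots> = (\<integral>x. \<bar>real_cond_exp M F g x\<bar> \<partial>M) + (\<integral>x. \<bar>g x\<bar> \<partial>M)"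
    using cgi gi by (intro Bochner_Integration.integral_add) auto
  also have "\<dots> \<le> 2 * (\<integral>x. \<bar>g x\<bar> \<partial>M)"
    using integral_abs_real_cond_exp_le[OF gi] by simp
  finally show ?thesis unfolding g_def .
qed

lemma square_summable_geometric_bound:
  fixes a :: "nat \<Rightarrow> real"
  assumes "\<And>i. 0 \<le> a i" "\<And>i. a i \<le> c * r ^ i" "0 \<le> r" "r < 1"
  shows "summable (\<lambda>i. (a i)\<^sup>2)" and "(\<Sum>i. (a i)\<^sup>2) \<le> c\<^sup>2 / (1 - r\<^sup>2)"
proof -
  have bound: "(a i)\<^sup>2 \<le> c\<^sup>2 * (r\<^sup>2) ^ i" for i
  proof -
    have "(a i)\<^sup>2 \<le> (c * r ^ i)\<^sup>2" by (rule power_mono[OF assms(2,1)])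
    then show ?thesis by (simp add: power_mult_distrib flip: power_mult) (simp add: mult.commute)
  qed
  have r2: "r\<^sup>2 < 1" using assms(3,4) by (simp add: power_less_one_iff)
  have geom: "summable (\<lambda>i. c\<^sup>2 * (r\<^sup>2) ^ i)"
    using assms(3) r2 by (intro summable_mult summable_geometric) simp
  show "summable (\<lambda>i. (a i)\<^sup>2)"
    by (rule summable_comparison_test'[OF geom, of 0]) (use bound in simp)
  then have "(\<Sum>i. (a i)\<^sup>2) \<le> (\<Sum>i. c\<^sup>2 * (r\<^sup>2) ^ i)"
    using geom bound by (intro suminf_le) auto
  also have "\<dots> = c\<^sup>2 / (1 - r\<^sup>2)"
    using assms(3) r2 by (simp add: suminf_mult suminf_geometric divide_simps)
  finally show "(\<Sum>i. (a i)\<^sup>2) \<le> c\<^sup>2 / (1 - r\<^sup>2)" .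
qed

context
  fixes p :: real
  assumes p: "0 < p" "p < 1"
begin

lemma emeasure_initial_failures:
  "emeasure (bits_space p) {X. \<forall>l\<le>t. \<not> X (u, l)} = ennreal ((1 - p) ^ (t + 1))"
proof -
  interpret product_prob_space "\<lambda>_. measure_pmf (bernoulli_pmf p)" UNIV
    by unfold_locales
  let ?J = "(\<lambda>l. (u, l)) ` {..t}"
  have "{X. \<forall>l\<le>t. \<not> X (u, l)} = {X \<in> space (bits_space p). \<forall>k\<in>?J. X k \<in> {False}}"
    by auto
  also have "emeasure (bits_space p) \<dots> = (\<Prod>k\<in>?J. emeasure (measure_pmf (bernoulli_pmf p)) {False})"
    unfolding bits_space_def by (rule emeasure_PiM_Collect) auto
  also have "\<dots> = (\<Prod>k\<in>?J. ennreal (1 - p))"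
    using p by (simp add: emeasure_pmf_single)
  also have "\<dots> = ennreal ((1 - p) ^ (t + 1))"
    using p by (simp add: card_image inj_on_def ennreal_power[symmetric] del: power_Suc)
  finally show ?thesis .
qed

lemma measure_initial_failures:
  "measure (bits_space p) {X. \<forall>l\<le>t. \<not> X (u, l)} = (1 - p) ^ (t + 1)"
  using emeasure_initial_failures p unfolding measure_def by simp

lemma AE_weight_attained: "AE X in bits_space p. \<exists>l. X (v, l)"
proof (rule AE_I')
  interpret prob_space "bits_space p" by (rule prob_space_bits_space)
  let ?N = "{X. \<forall>l. \<not> X (v, l)}"
  have "{X \<in> space (bits_space p). \<forall>l. \<not> X (v, l)} \<in> sets (bits_space p)" by measurable
  then have N: "?N \<in> sets (bits_space p)" by simp
  have "measure (bits_space p) ?N \<le> (1 - p) ^ (t + 1)" for t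
  proof -
    have "measure (bits_space p) ?N \<le> measure (bits_space p) {X. \<forall>l\<le>t. \<not> X (v, l)}"
      by (rule finite_measure_mono) auto
    then show ?thesis by (simp only: measure_initial_failures)
  qed
  moreover have "(\<lambda>t. (1 - p) ^ (t + 1)) \<longlonglongrightarrow> 0"
    using p by (simp add: LIMSEQ_Suc LIMSEQ_power_zero del: power_Suc)
  ultimately have "measure (bits_space p) ?N \<le> 0"
    by (intro LIMSEQ_le_const[where a = "measure (bits_space p) ?N"]) auto
  then show "?N \<in> null_sets (bits_space p)"
    using N by (simp add: emeasure_eq_measure null_sets_def measure_le_0_iff)
qed auto

lemma measure_initial_failures_inter_le:
  assumes A: "A \<in> sets (bits_space p)" and \<theta>: "0 < \<theta>" "\<theta> < 1"
  shows "measure (bits_space p) ({X. \<forall>l\<le>t. \<not> X (u, l)} \<inter> A)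
           \<le> ((1 - p) powr \<theta>) ^ (t + 1) * measure (bits_space p) A powr (1 - \<theta>)"
proof -
  interpret prob_space "bits_space p" by (rule prob_space_bits_space)
  have "measure (bits_space p) ({X. \<forall>l\<le>t. \<not> X (u, l)} \<inter> A)
          \<le> min ((1 - p) ^ (t + 1)) (measure (bits_space p) A)"
  proof (rule min.boundedI)
    show "measure (bits_space p) ({X. \<forall>l\<le>t. \<not> X (u, l)} \<inter> A) \<le> (1 - p) ^ (t + 1)"
      using finite_measure_mono[of "{X. \<forall>l\<le>t. \<not> X (u, l)} \<inter> A" "{X. \<forall>l\<le>t. \<not> X (u, l)}"]
      by (simp add: measure_initial_failures)
    show "measure (bits_space p) ({X. \<forall>l\<le>t. \<not> X (u, l)} \<inter> A) \<le> measure (bits_space p) A"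
      using A by (intro finite_measure_mono) auto
  qed
  also have "\<dots> \<le> ((1 - p) ^ (t + 1)) powr \<theta> * measure (bits_space p) A powr (1 - \<theta>)"
    using p \<theta> by (intro min_le_powr_mult_powr) auto
  also have "((1 - p) ^ (t + 1)) powr \<theta> = ((1 - p) powr \<theta>) ^ (t + 1)"
    using p by (simp add: powr_realpow[symmetric] powr_powr mult.commute del: of_nat_Suc power_Suc)
  finally show ?thesis .
qed

lemma nn_integral_excess_weight_le:
  assumes A: "A \<in> sets (bits_space p)" and \<theta>: "0 < \<theta>" "\<theta> < 1"
  defines "r \<equiv> (1 - p) powr \<theta>"
  shows "(\<integral>\<^sup>+X. ennreal (real (weight X u - m) * indicator A X) \<partial>bits_space p)
           \<le> ennreal (measure (bits_space p) A powr (1 - \<theta>) * r ^ (m + 1) / (1 - r))"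
proof -
  interpret prob_space "bits_space p" by (rule prob_space_bits_space)
  let ?M = "bits_space p" and ?P = "measure (bits_space p) A powr (1 - \<theta>)"
  define Z where "Z j = {X. \<forall>l\<le>m + j. \<not> X (u, l)} \<inter> A" for j
  have Z [measurable]: "Z j \<in> sets ?M" for j unfolding Z_def using A by auto
  have r: "0 < r" "r < 1" unfolding r_def using p \<theta> powr_less_mono2[of \<theta> "1 - p" 1] by auto
  have "(\<integral>\<^sup>+X. ennreal (real (weight X u - m) * indicator A X) \<partial>?M)
          \<le> (\<integral>\<^sup>+X. (\<Sum>j. indicator (Z j) X) \<partial>?M)"
    unfolding Z_def by (intro nn_integral_mono excess_weight_le_suminf_failures)
  also have "\<dots> = (\<Sum>j. emeasure ?M (Z j))"
    by (simp add: nn_integral_suminf)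
  also have "\<dots> \<le> (\<Sum>j. ennreal (?P * r ^ (m + 1) * r ^ j))"
  proof (intro suminf_le allI)
    fix j
    have "measure ?M (Z j) \<le> ?P * r ^ (m + 1) * r ^ j"
      using measure_initial_failures_inter_le[OF A \<theta>, of "m + j" u]
      unfolding Z_def r_def by (simp add: power_add mult_ac)
    then show "emeasure ?M (Z j) \<le> ennreal (?P * r ^ (m + 1) * r ^ j)"
      by (simp add: emeasure_eq_measure ennreal_leI)
  qed auto
  also have "\<dots> = ennreal (\<Sum>j. ?P * r ^ (m + 1) * r ^ j)"
    using r by (intro suminf_ennreal2) (auto intro: summable_mult summable_geometric)
  also have "(\<Sum>j. ?P * r ^ (m + 1) * r ^ j) = ?P * r ^ (m + 1) / (1 - r)"
    using r by (simp add: suminf_mult suminf_geometric summable_geometric divide_simps)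
  finally show ?thesis .
qed

lemma integrable_weight: "integrable (bits_space p) (\<lambda>X. real (weight X u))"
proof (rule integrableI_nonneg)
  let ?M = "bits_space p"
  have "(\<integral>\<^sup>+X. ennreal (real (weight X u)) \<partial>?M)
          = (\<integral>\<^sup>+X. ennreal (real (weight X u - 0) * indicator (space ?M) X) \<partial>?M)"
    by simp
  also have "\<dots> \<le> ennreal (measure ?M (space ?M) powr (1 - 1/2) * ((1 - p) powr (1/2)) ^ (0 + 1)
                           / (1 - (1 - p) powr (1/2)))"
    using sets.top[of ?M] by (intro nn_integral_excess_weight_le) auto
  also have "\<dots> < \<infinity>" by simp
  finally show "(\<integral>\<^sup>+X. ennreal (real (weight X u)) \<partial>?M) < \<infinity>" .
qed auto

lemma integrable_path_weight: "integrable (bits_space p) (\<lambda>X. path_weight X \<gamma>)"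
  by (induction \<gamma>) (auto simp: path_weight_def integrable_weight)

lemma integrable_passage_time: "integrable (bits_space p) (passage_time n)"
proof (rule Bochner_Integration.integrable_bound)
  show "integrable (bits_space p) (\<lambda>X. \<Sum>\<gamma>\<in>{\<gamma>. up_right_path n \<gamma>}. path_weight X \<gamma>)"
    by (auto simp: integrable_path_weight)
  show "AE X in bits_space p.
          norm (passage_time n X) \<le> norm (\<Sum>\<gamma>\<in>{\<gamma>. up_right_path n \<gamma>}. path_weight X \<gamma>)"
  proof (rule AE_I2)
    fix X
    show "norm (passage_time n X) \<le> norm (\<Sum>\<gamma>\<in>{\<gamma>. up_right_path n \<gamma>}. path_weight X \<gamma>)"
      using passage_time_le_sum_path_weight[of n X] passage_time_nonneg[of n X]
      by simp
  qed
qed measurable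

lemma integral_passage_time_set_bit_deviation_le:
  assumes \<theta>: "0 < \<theta>" "\<theta> < 1"
  defines "r \<equiv> (1 - p) powr \<theta>"
  shows "(\<integral>X. \<bar>passage_time n X - passage_time n (X((v, i) := True))\<bar> \<partial>bits_space p)
           \<le> measure (bits_space p) {X \<in> space (bits_space p). v \<in> geodesic_vertices n X} powr (1 - \<theta>)
              * r ^ (i + 1) / (1 - r)"
    (is "_ \<le> ?B")
proof -
  let ?M = "bits_space p" and ?A = "{X. v \<in> geodesic_vertices n X}"
  define D where "D X = real (weight X v - i) * indicator ?A X" for X
  have A: "?A \<in> sets ?M" using sets_geodesic_vertex_event[of p v n] by simp
  have r: "0 < r" "r < 1" unfolding r_def using p \<theta> powr_less_mono2[of \<theta> "1 - p" 1] by auto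
  have D_nn_integral: "(\<integral>\<^sup>+X. ennreal (D X) \<partial>?M) \<le> ennreal ?B"
    using nn_integral_excess_weight_le[OF A \<theta>] unfolding D_def r_def by simp
  have [measurable]: "D \<in> borel_measurable ?M"
    unfolding D_def using A by measurable
  have D_integrable: "integrable ?M D"
  proof (rule integrableI_nonneg)
    show "(\<integral>\<^sup>+X. ennreal (D X) \<partial>?M) < \<infinity>"
      using D_nn_integral by (simp add: le_less_trans)
  qed (auto simp: D_def)
  have "AE X in ?M. \<bar>passage_time n X - passage_time n (X((v, i) := True))\<bar> \<le> D X"
    using AE_weight_attained[of v]
    by eventually_elim (use passage_time_set_bit in \<open>auto simp: D_def\<close>)
  then have "(\<integral>X. \<bar>passage_time n X - passage_time n (X((v, i) := True))\<bar> \<partial>?M)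
               \<le> (\<integral>X. D X \<partial>?M)"
    by (rule integral_mono_AE'[OF D_integrable]) (simp add: D_def)
  also have "(\<integral>X. D X \<partial>?M) = enn2real (\<integral>\<^sup>+X. ennreal (D X) \<partial>?M)"
    by (rule integral_eq_nn_integral) (auto simp: D_def)
  also have "\<dots> \<le> ?B"
    using enn2real_mono[OF D_nn_integral] r by simp
  finally show ?thesis .
qed

lemma influence_le:
  assumes \<theta>: "0 < \<theta>" "\<theta> < 1"
  defines "r \<equiv> (1 - p) powr \<theta>"
  shows "influence p n v i
           \<le> 2 * (measure (bits_space p) {X \<in> space (bits_space p). v \<in> geodesic_vertices n X} powr (1 - \<theta>)
              * r ^ (i + 1) / (1 - r))"
proof -
  interpret prob_space "bits_space p" by (rule prob_space_bits_space)
  let ?h = "\<lambda>X. passage_time n (X((v, i) := True))"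
  have h_others: "?h \<in> borel_measurable (others_algebra p (v, i))"
    by (rule measurable_passage_time_set_bit)
  have "integrable (bits_space p) ?h"
  proof (rule Bochner_Integration.integrable_bound[OF integrable_passage_time])
    show "?h \<in> borel_measurable (bits_space p)"
      by (rule measurable_from_subalg[OF subalgebra_others_algebra h_others])
    show "AE X in bits_space p. norm (?h X) \<le> norm (passage_time n X)"
      using AE_weight_attained[of v]
      by eventually_elim (use passage_time_set_bit_le passage_time_nonneg in auto)
  qed
  moreover have "sigma_finite_subalgebra (bits_space p) (others_algebra p (v, i))"
    by (rule finite_measure_subalgebra_is_sigma_finite) (unfold_locales, rule subalgebra_others_algebra)
  ultimately have "influence p n v i \<le> 2 * (\<integral>X. \<bar>passage_time n X - ?h X\<bar> \<partial>bits_space p)"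
    unfolding influence_def
    by (intro cond_exp_deviation_le integrable_passage_time h_others)
  then show ?thesis
    using integral_passage_time_set_bit_deviation_le[OF \<theta>, of n v i] unfolding r_def by simp
qed


lemma influence_square_sum_le:
  fixes n :: nat and v :: site
  assumes \<theta>: "0 < \<theta>" "\<theta> < 1"
  defines "r \<equiv> (1 - p) powr \<theta>"
    and "P \<equiv> measure (bits_space p) {X \<in> space (bits_space p). v \<in> geodesic_vertices n X}"
  shows "summable (\<lambda>i. (influence p n v i)\<^sup>2) \<and>
         (\<Sum>i. (influence p n v i)\<^sup>2) \<le> (2 * r / (1 - r))\<^sup>2 / (1 - r\<^sup>2) * P powr (2 - 2 * \<theta>)"
proof
  have r: "0 < r" "r < 1" unfolding r_def using p \<theta> powr_less_mono2[of \<theta> "1 - p" 1] by auto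
  have nonneg: "0 \<le> influence p n v i" for i
    unfolding influence_def by simp
  have decay: "influence p n v i \<le> (2 * r / (1 - r) * P powr (1 - \<theta>)) * r ^ i" for i
    using influence_le[OF \<theta>, of n v i] unfolding r_def P_def by (simp add: field_simps)
  show "summable (\<lambda>i. (influence p n v i)\<^sup>2)"
    using r by (intro square_summable_geometric_bound(1)[OF nonneg decay]) auto
  have "(\<Sum>i. (influence p n v i)\<^sup>2) \<le> (2 * r / (1 - r) * P powr (1 - \<theta>))\<^sup>2 / (1 - r\<^sup>2)"
    using r by (intro square_summable_geometric_bound(2)[OF nonneg decay]) auto
  also have "\<dots> = (2 * r / (1 - r))\<^sup>2 / (1 - r\<^sup>2) * P powr (2 - 2 * \<theta>)"
    by (simp add: power_mult_distrib power2_eq_square powr_add[symmetric])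
  finally show "(\<Sum>i. (influence p n v i)\<^sup>2)
                  \<le> (2 * r / (1 - r))\<^sup>2 / (1 - r\<^sup>2) * P powr (2 - 2 * \<theta>)" .
qed
end

theorem lemma5p1:
  fixes \<delta> p :: real
  assumes "\<delta> > 0" and "0 < p" and "p < 1"
  shows "\<exists>C::real. \<forall>n::nat. \<forall>v::int \<times> int.
           n \<ge> 1 \<longrightarrow> fst v \<in> {0..int n} \<longrightarrow> snd v \<in> {0..int n} \<longrightarrow>
           summable (\<lambda>i. (influence p n v i)\<^sup>2) \<and>
           (\<Sum>i. (influence p n v i)\<^sup>2)
             \<le> C * (measure (bits_space p) {X \<in> space (bits_space p). v \<in> geodesic_vertices n X}) powr (2 - \<delta>)"
proof -
  define \<theta> where "\<theta> = min \<delta> 1 / 2"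
  define r where "r = (1 - p) powr \<theta>"
  define C where "C = (2 * r / (1 - r))\<^sup>2 / (1 - r\<^sup>2)"
  have \<theta>: "0 < \<theta>" "\<theta> < 1" "2 - \<delta> \<le> 2 - 2 * \<theta>" unfolding \<theta>_def using assms by auto
  have C: "0 \<le> C"
    unfolding C_def r_def using assms \<theta> powr_less_mono2[of \<theta> "1 - p" 1] by (simp add: power_le_one)
  show ?thesis
  proof (intro exI allI impI)
    fix n :: nat and v :: site
    let ?P = "measure (bits_space p) {X \<in> space (bits_space p). v \<in> geodesic_vertices n X}"
    have "?P \<le> 1" using prob_space.prob_le_1[OF prob_space_bits_space] by simp
    then have "C * ?P powr (2 - 2 * \<theta>) \<le> C * ?P powr (2 - \<delta>)"
      using C \<theta> by (intro mult_left_mono powr_mono') auto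
    then show "summable (\<lambda>i. (influence p n v i)\<^sup>2) \<and>
               (\<Sum>i. (influence p n v i)\<^sup>2) \<le> C * ?P powr (2 - \<delta>)"
      using influence_square_sum_le[OF assms(2,3) \<theta>(1,2), of n v] unfolding C_def r_def by auto
  qed
qed

end
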